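(* Let $(X,d)$ be a complete separable metric space without isolated points and let $f\colon X\to X$ be a continuous map. Then the following are equivalent: (1) for each $k\geq 2$, $\mathrm{Prox}_k(f)$ is dense in $X^k$; (2) there exist a sequence $\{p_n\}$ in $\mathbb{N}$ and a dense $\sigma$-Cantor subset $S$ of $X$ such that for any $x,y\in S$, $\lim_{n\to\infty} d(f^{p_n}(x),f^{p_n}(y))=0$.
   Context: For $k\geq 2$, $\mathrm{Prox}_k(f)=\{(x_1,\dots,x_k)\in X^k: \liminf_{n\to\infty}\max_{1\leq i<j\leq k} d(f^n(x_i),f^n(x_j))=0\}$. A $\sigma$-Cantor set is a countable union of sets each homeomorphic to the Cantor ternary set. *)

theory Defs
  imports "HOL-Analysis.Analysis"
begin

definition cantor_ternary_set :: "real set" where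
  "cantor_ternary_set = {(\<Sum>i. (if a i then 2 else 0) / 3 ^ Suc i) | a :: nat \<Rightarrow> bool. True}"

definition sigma_cantor :: "'a::topological_space set \<Rightarrow> bool" where
  "sigma_cantor S \<longleftrightarrow> (\<exists>\<K>. countable \<K> \<and> (\<forall>K\<in>\<K>. K homeomorphic cantor_ternary_set) \<and> S = \<Union>\<K>)"

definition Prox :: "nat \<Rightarrow> ('a::metric_space \<Rightarrow> 'a) \<Rightarrow> (nat \<Rightarrow> 'a) set" where
  "Prox k f = {x \<in> PiE {..<k} (\<lambda>_. UNIV).
     liminf (\<lambda>n. ereal (Max {dist ((f ^^ n) (x i)) ((f ^^ n) (x j)) | i j. i < j \<and> j < k})) = 0}"

end

theory Submission
  imports Defs
begin

text \<open>
  (1) \<Longrightarrow> (2): Fix countably many nonempty open sets \<open>B j\<close> such that every nonempty open set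
  contains one of them. By induction on the stage \<open>n\<close> we build Cantor schemes, one for each \<open>j\<close>,
  rooted in \<open>B j\<close>: scheme \<open>j\<close> starts at stage \<open>j\<close>, so stage \<open>n\<close> consists of finitely many cells.
  Density of \<open>Prox\<^sub>k\<close>, with \<open>k\<close> the number of cells, provides points in all parent cells and one
  time \<open>p n\<close> at which their \<open>f\<^bsup>p n\<^esup>\<close>-images are close; by continuity, small balls around
  these points are the cells of stage \<open>n\<close>. Each scheme yields a Cantor set \<open>K j \<subseteq> B j\<close>,
  and any two points of the dense \<open>\<sigma>\<close>-Cantor set \<open>\<Union>j. K j\<close> lie in cells of every later stage,
  so their distance at time \<open>p n\<close> tends to 0.

  (2) \<Longrightarrow> (1): Tuples of points of the dense set \<open>S\<close> are proximal. This is immediate if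
  \<open>p\<close> is unbounded along a subsequence; otherwise some time \<open>c\<close> occurs infinitely often in \<open>p\<close>,
  so \<open>f\<^bsup>c\<^esup>\<close> is constant on \<open>S\<close> and hence, by continuity, on the whole space.
\<close>

section \<open>The Cantor set\<close>

definition cantor_point :: "(nat \<Rightarrow> bool) \<Rightarrow> real" where
  "cantor_point a = (\<Sum>i. (if a i then 2 else 0) / 3 ^ Suc i)"

lemma cantor_ternary_set_eq_range: "cantor_ternary_set = range cantor_point"
  unfolding cantor_ternary_set_def cantor_point_def by auto

lemma sums_two_thirds_powers: "(\<lambda>i. 2 / 3 ^ Suc i) sums (1::real)"
  using sums_mult[OF geometric_sums[of "1/3::real"], of "2/3"]
  by (simp add: power_divide field_simps)

lemma cantor_point_sums: "(\<lambda>i. (if a i then 2 else 0) / 3 ^ Suc i) sums cantor_point a"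
proof -
  have "summable (\<lambda>i. (if a i then 2 else 0) / (3::real) ^ Suc i)"
    by (rule summable_comparison_test'[OF sums_summable[OF sums_two_thirds_powers]]) auto
  then show ?thesis unfolding cantor_point_def by (rule summable_sums)
qed

lemma cantor_point_bounds: "0 \<le> cantor_point a" "cantor_point a \<le> 1"
proof -
  show "0 \<le> cantor_point a"
    by (rule sums_le[OF _ sums_zero cantor_point_sums]) simp
  show "cantor_point a \<le> 1"
    by (rule sums_le[OF _ cantor_point_sums sums_two_thirds_powers]) simp
qed

lemma cantor_point_split:
  "cantor_point a = (\<Sum>i<m. (if a i then 2 else 0) / 3 ^ Suc i) + cantor_point (\<lambda>i. a (i + m)) / 3 ^ m"
proof -
  have "(\<lambda>i. (if a (i + m) then 2 else 0) / 3 ^ Suc (i + m)) sums (cantor_point (\<lambda>i. a (i + m)) / 3 ^ m)"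
    using sums_divide[OF cantor_point_sums[of "\<lambda>i. a (i + m)"], of "3 ^ m"]
    by (simp add: power_add mult_ac)
  then show ?thesis
    using sums_unique2[OF sums_split_initial_segment[OF cantor_point_sums[of a], of m]] by fastforce
qed

lemma cantor_point_dist_le_one: "\<bar>cantor_point a - cantor_point b\<bar> \<le> 1"
  using cantor_point_bounds[of a] cantor_point_bounds[of b] by linarith

lemma cantor_point_dist_le:
  assumes "\<forall>i<m. a i = b i"
  shows "\<bar>cantor_point a - cantor_point b\<bar> \<le> 1 / 3 ^ m"
proof -
  have "cantor_point a - cantor_point b
      = (cantor_point (\<lambda>i. a (i + m)) - cantor_point (\<lambda>i. b (i + m))) / 3 ^ m"
    using cantor_point_split[of a m] cantor_point_split[of b m] assms
    by (simp add: diff_divide_distrib)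
  then show ?thesis by (simp add: divide_right_mono cantor_point_dist_le_one)
qed

lemma cantor_point_dist_ge:
  assumes "\<forall>i<m. a i = b i" "a m \<noteq> b m"
  shows "1 / 3 ^ Suc m \<le> \<bar>cantor_point a - cantor_point b\<bar>"
proof -
  define digit where "digit c i = (if c i then 2 else 0) / (3::real) ^ Suc i" for c i
  have "(\<Sum>i<Suc m. digit a i) - (\<Sum>i<Suc m. digit b i) = digit a m - digit b m"
    using assms(1) by (simp add: digit_def)
  moreover have "\<bar>digit a m - digit b m\<bar> = 2 / 3 ^ Suc m"
    using assms(2) by (auto simp: digit_def)
  moreover have "\<bar>cantor_point (\<lambda>i. a (i + Suc m)) / 3 ^ Suc m - cantor_point (\<lambda>i. b (i + Suc m)) / 3 ^ Suc m\<bar>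
      \<le> 1 / 3 ^ Suc m"
    by (simp add: diff_divide_distrib[symmetric] divide_right_mono cantor_point_dist_le_one)
  ultimately show ?thesis
    using cantor_point_split[of a "Suc m"] cantor_point_split[of b "Suc m"]
    unfolding digit_def by linarith
qed

lemma cantor_point_close_imp_agree:
  assumes "\<bar>cantor_point a - cantor_point b\<bar> < 1 / 3 ^ n"
  shows "\<forall>i<n. a i = b i"
  using assms
proof (induction n)
  case (Suc n)
  have "1 / (3::real) ^ Suc n \<le> 1 / 3 ^ n" by (simp add: divide_le_eq)
  then have "\<forall>i<n. a i = b i" using Suc by simp
  moreover have "a n = b n"
    using cantor_point_dist_ge[OF \<open>\<forall>i<n. a i = b i\<close>] Suc.prems by force
  ultimately show ?case using less_Suc_eq by auto
qed simp

definition uniform_cantor_embedding :: "((nat \<Rightarrow> bool) \<Rightarrow> 'a::metric_space) \<Rightarrow> bool" where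
  "uniform_cantor_embedding \<Phi> \<longleftrightarrow>
     (\<forall>e>0. \<exists>n. \<forall>a b. (\<forall>i<n. a i = b i) \<longrightarrow> dist (\<Phi> a) (\<Phi> b) < e) \<and>
     (\<forall>n. \<exists>d>0. \<forall>a b. dist (\<Phi> a) (\<Phi> b) < d \<longrightarrow> (\<forall>i<n. a i = b i))"

lemma uniform_cantor_embedding_inj:
  assumes "uniform_cantor_embedding \<Phi>"
  shows "inj \<Phi>"
proof (rule injI)
  fix a b assume "\<Phi> a = \<Phi> b"
  have "\<forall>i<n. a i = b i" for n
  proof -
    obtain d where "d > 0" "\<And>a b. dist (\<Phi> a) (\<Phi> b) < d \<Longrightarrow> \<forall>i<n. a i = b i"
      using assms unfolding uniform_cantor_embedding_def by blast
    then show ?thesis using \<open>\<Phi> a = \<Phi> b\<close> by simp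
  qed
  then show "a = b" by blast
qed

lemma continuous_on_uniform_cantor_embedding_inv:
  assumes \<Phi>: "uniform_cantor_embedding \<Phi>" and \<Psi>: "uniform_cantor_embedding \<Psi>"
  shows "continuous_on (range \<Phi>) (\<Psi> \<circ> inv \<Phi>)"
  unfolding continuous_on_iff
proof (intro ballI allI impI)
  fix x e assume "x \<in> range \<Phi>" "0 < (e::real)"
  then obtain a where a: "x = \<Phi> a" by blast
  obtain n where n: "\<And>a b. \<forall>i<n. a i = b i \<Longrightarrow> dist (\<Psi> a) (\<Psi> b) < e"
    using \<Psi> \<open>0 < e\<close> unfolding uniform_cantor_embedding_def by blast
  obtain d where d: "d > 0" "\<And>a b. dist (\<Phi> a) (\<Phi> b) < d \<Longrightarrow> \<forall>i<n. a i = b i"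
    using \<Phi> unfolding uniform_cantor_embedding_def by blast
  show "\<exists>d>0. \<forall>x'\<in>range \<Phi>. dist x' x < d \<longrightarrow> dist ((\<Psi> \<circ> inv \<Phi>) x') ((\<Psi> \<circ> inv \<Phi>) x) < e"
  proof (intro exI[of _ d] conjI ballI impI)
    fix x' assume "x' \<in> range \<Phi>" "dist x' x < d"
    then obtain b where b: "x' = \<Phi> b" "dist (\<Phi> b) (\<Phi> a) < d" unfolding a by blast
    have "inv \<Phi> (\<Phi> c) = c" for c by (simp add: uniform_cantor_embedding_inj[OF \<Phi>])
    then show "dist ((\<Psi> \<circ> inv \<Phi>) x') ((\<Psi> \<circ> inv \<Phi>) x) < e"
      using n[OF d(2)[OF b(2)]] unfolding a b(1) by simp
  qed (fact d)
qed

lemma uniform_cantor_embedding_homeomorphic: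
  assumes "uniform_cantor_embedding \<Phi>" "uniform_cantor_embedding \<Psi>"
  shows "range \<Phi> homeomorphic range \<Psi>"
proof -
  have "homeomorphism (range \<Phi>) (range \<Psi>) (\<Psi> \<circ> inv \<Phi>) (\<Phi> \<circ> inv \<Psi>)"
    unfolding homeomorphism_def
    using continuous_on_uniform_cantor_embedding_inv[OF assms]
      continuous_on_uniform_cantor_embedding_inv[OF assms(2,1)]
      uniform_cantor_embedding_inj[OF assms(1)] uniform_cantor_embedding_inj[OF assms(2)]
    by (simp add: image_comp)
  then show ?thesis unfolding homeomorphic_def by blast
qed

lemma uniform_cantor_embedding_cantor_point: "uniform_cantor_embedding cantor_point"
  unfolding uniform_cantor_embedding_def dist_real_def
proof (intro conjI allI impI)
  fix e :: real assume "e > 0"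
  then obtain n where n: "1 / 3 ^ n < e"
    using real_arch_pow_inv[of e "1 / 3"] by (auto simp: power_one_over)
  show "\<exists>n. \<forall>a b. (\<forall>i<n. a i = b i) \<longrightarrow> \<bar>cantor_point a - cantor_point b\<bar> < e"
  proof (intro exI[of _ n] allI impI)
    fix a b :: "nat \<Rightarrow> bool" assume "\<forall>i<n. a i = b i"
    from cantor_point_dist_le[OF this] n
    show "\<bar>cantor_point a - cantor_point b\<bar> < e" by linarith
  qed
next
  show "\<exists>d>0. \<forall>a b. \<bar>cantor_point a - cantor_point b\<bar> < d \<longrightarrow> (\<forall>i<n. a i = b i)" for n
    using cantor_point_close_imp_agree by (intro exI[of _ "1 / 3 ^ n"]) auto
qed

section \<open>Cantor schemes\<close>

lemma cantor_scheme_branch_points: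
  fixes U :: "bool list \<Rightarrow> 'a::complete_space set"
  assumes nonempty: "\<And>w. U w \<noteq> {}"
    and nested: "\<And>w b. closure (U (w @ [b])) \<subseteq> U w"
    and small: "\<And>w x y. x \<in> U w \<Longrightarrow> y \<in> U w \<Longrightarrow> dist x y < 1 / Suc (length w)"
  obtains \<Psi> where "\<And>a n. \<Psi> a \<in> U (map a [0..<n])"
proof -
  have closure_Suc: "closure (U (map a [0..<Suc n])) \<subseteq> U (map a [0..<n])" for a n
    using nested by simp
  have antimono: "U (map a [0..<n]) \<subseteq> U (map a [0..<m])" if "m \<le> n" for a m n
    by (rule lift_Suc_antimono_le[of "\<lambda>n. U (map a [0..<n])", OF _ that])
      (use closure_Suc closure_subset in blast)
  have "\<exists>z. \<forall>n. z \<in> closure (U (map a [0..<Suc n]))" for a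
  proof -
    obtain z where "\<And>n. z \<in> closure (U (map a [0..<Suc n]))"
    proof (rule decreasing_closed_nest)
      show "closure (U (map a [0..<Suc n])) \<subseteq> closure (U (map a [0..<Suc m]))" if "m \<le> n" for m n
        using antimono[of "Suc m" "Suc n"] that by (intro closure_mono) simp
      show "\<exists>n. \<forall>x\<in>closure (U (map a [0..<Suc n])). \<forall>y\<in>closure (U (map a [0..<Suc n])). dist x y < e"
        if "e > 0" for e
      proof -
        obtain n where n: "1 / Suc n < e"
          using reals_Archimedean[OF \<open>e > 0\<close>] by (auto simp: inverse_eq_divide)
        have "dist x y < e"
          if "x \<in> closure (U (map a [0..<Suc n]))" "y \<in> closure (U (map a [0..<Suc n]))" for x y
          using small[of x "map a [0..<n]" y] closure_Suc that n by force
        then show ?thesis by blast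
      qed
      show "closed (closure (U (map a [0..<Suc n])))" for n by simp
      show "closure (U (map a [0..<Suc n])) \<noteq> {}" for n using nonempty by simp
    qed blast
    then show ?thesis by blast
  qed
  then obtain \<Psi> where "\<And>a n. \<Psi> a \<in> closure (U (map a [0..<Suc n]))" by metis
  then have "\<Psi> a \<in> U (map a [0..<n])" for a n
    using closure_Suc[of a n] by blast
  then show thesis using that by blast
qed

lemma cantor_scheme_uniform_embedding:
  fixes U :: "bool list \<Rightarrow> 'a::metric_space set" and \<delta> :: "nat \<Rightarrow> real"
  assumes \<Psi>: "\<And>a n. \<Psi> a \<in> U (map a [0..<n])"
    and small: "\<And>w x y. x \<in> U w \<Longrightarrow> y \<in> U w \<Longrightarrow> dist x y < 1 / Suc (length w)"
    and separated: "\<And>w w' x y. length w = length w' \<Longrightarrow> w \<noteq> w' \<Longrightarrow> x \<in> U w \<Longrightarrow> y \<in> U w'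
                      \<Longrightarrow> \<delta> (length w) \<le> dist x y"
    and \<delta>_pos: "\<And>n. \<delta> n > 0"
  shows "uniform_cantor_embedding \<Psi>"
  unfolding uniform_cantor_embedding_def
proof (intro conjI allI impI)
  fix e :: real assume "e > 0"
  then obtain n where n: "1 / Suc n < e" using reals_Archimedean by (auto simp: inverse_eq_divide)
  show "\<exists>n. \<forall>a b. (\<forall>i<n. a i = b i) \<longrightarrow> dist (\<Psi> a) (\<Psi> b) < e"
  proof (intro exI[of _ n] allI impI)
    fix a b :: "nat \<Rightarrow> bool" assume "\<forall>i<n. a i = b i"
    then have "map b [0..<n] = map a [0..<n]" by (simp add: map_eq_conv)
    then have "\<Psi> b \<in> U (map a [0..<n])" using \<Psi>[of b n] by metis
    then show "dist (\<Psi> a) (\<Psi> b) < e" using small[OF \<Psi>[of a n]] n by fastforce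
  qed
next
  fix n
  show "\<exists>d>0. \<forall>a b. dist (\<Psi> a) (\<Psi> b) < d \<longrightarrow> (\<forall>i<n. a i = b i)"
  proof (intro exI[of _ "\<delta> n"] conjI allI impI)
    fix a b :: "nat \<Rightarrow> bool" and i assume "dist (\<Psi> a) (\<Psi> b) < \<delta> n" "i < n"
    then have "map a [0..<n] = map b [0..<n]"
      using separated[OF _ _ \<Psi>[of a n] \<Psi>[of b n]] by force
    then show "a i = b i" using \<open>i < n\<close> by (simp add: map_eq_conv)
  qed (fact \<delta>_pos)
qed

lemma cantor_scheme_embedding:
  fixes U :: "bool list \<Rightarrow> 'a::complete_space set" and \<delta> :: "nat \<Rightarrow> real"
  assumes nonempty: "\<And>w. U w \<noteq> {}"
    and nested: "\<And>w b. closure (U (w @ [b])) \<subseteq> U w"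
    and small: "\<And>w x y. x \<in> U w \<Longrightarrow> y \<in> U w \<Longrightarrow> dist x y < 1 / Suc (length w)"
    and separated: "\<And>w w' x y. length w = length w' \<Longrightarrow> w \<noteq> w' \<Longrightarrow> x \<in> U w \<Longrightarrow> y \<in> U w'
                      \<Longrightarrow> \<delta> (length w) \<le> dist x y"
    and \<delta>_pos: "\<And>n. \<delta> n > 0"
  obtains K where "K homeomorphic cantor_ternary_set" "K \<noteq> {}"
    "\<And>x n. x \<in> K \<Longrightarrow> \<exists>w. length w = n \<and> x \<in> U w"
proof -
  obtain \<Psi> where \<Psi>: "\<And>a n. \<Psi> a \<in> U (map a [0..<n])"
    using cantor_scheme_branch_points[OF nonempty nested small] by blast
  have "range \<Psi> homeomorphic cantor_ternary_set"
    unfolding cantor_ternary_set_eq_range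
    using cantor_scheme_uniform_embedding[where U = U and \<Psi> = \<Psi> and \<delta> = \<delta>, OF \<Psi> small separated \<delta>_pos]
      uniform_cantor_embedding_cantor_point
    by (rule uniform_cantor_embedding_homeomorphic)
  moreover have "\<exists>w. length w = n \<and> x \<in> U w" if x: "x \<in> range \<Psi>" for x n
  proof -
    obtain a where "x = \<Psi> a" using x by blast
    then show ?thesis using \<Psi>[of a n] by (intro exI[of _ "map a [0..<n]"]) simp
  qed
  ultimately show thesis by (intro that[of "range \<Psi>"]) auto
qed

section \<open>Small balls and separated open sets\<close>

lemma at_right_zero_witness:
  assumes "eventually P (at_right (0::real))"
  obtains r where "r > 0" "P r"
  using eventually_happens'[OF trivial_limit_at_right_real eventually_conj[OF eventually_at_right_less assms]]
  by blast

lemma eventually_cball_subset: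
  assumes "open S" "x \<in> S"
  shows "eventually (\<lambda>r. cball x r \<subseteq> S) (at_right 0)"
proof -
  obtain e where "e > 0" "cball x e \<subseteq> S" using assms open_contains_cball by blast
  then show ?thesis
    unfolding eventually_at_right_field by (intro exI[of _ e]) auto
qed

lemma eventually_at_right_less_const:
  assumes "(0::real) < d"
  shows "eventually (\<lambda>r. r < d) (at_right 0)"
  using assms unfolding eventually_at_right_field by blast

lemma countable_nonempty_open_base:
  obtains B :: "nat \<Rightarrow> 'a::second_countable_topology set"
  where "\<And>j. open (B j)" "\<And>j. B j \<noteq> {}" "\<And>T. open T \<Longrightarrow> T \<noteq> {} \<Longrightarrow> \<exists>j. B j \<subseteq> T"
proof -
  obtain \<B> :: "'a set set" where \<B>: "countable \<B>" "\<And>C. C \<in> \<B> \<Longrightarrow> open C"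
    "\<And>T. open T \<Longrightarrow> \<exists>\<U>. \<U> \<subseteq> \<B> \<and> T = \<Union>\<U>"
    using univ_second_countable by blast
  have meets: "\<exists>C\<in>\<B> - {{}}. C \<subseteq> T" if "open T" "T \<noteq> {}" for T
    using \<B>(3)[OF \<open>open T\<close>] \<open>T \<noteq> {}\<close> by blast
  then have "\<B> - {{}} \<noteq> {}" by blast
  then have range: "range (from_nat_into (\<B> - {{}})) = \<B> - {{}}"
    using \<B>(1) by simp
  show thesis
  proof (rule that)
    show "open (from_nat_into (\<B> - {{}}) j)" "from_nat_into (\<B> - {{}}) j \<noteq> {}" for j
      using range \<B>(2) by blast+
    show "\<exists>j. from_nat_into (\<B> - {{}}) j \<subseteq> T" if "open T" "T \<noteq> {}" for T
      using meets[OF that] range by (metis rangeE)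
  qed
qed

lemma finite_inj_points_in_open:
  fixes P :: "'i \<Rightarrow> 'a::{t1_space, perfect_space} set"
  assumes "finite I" "\<And>i. i \<in> I \<Longrightarrow> open (P i)" "\<And>i. i \<in> I \<Longrightarrow> P i \<noteq> {}"
  obtains y where "inj_on y I" "\<And>i. i \<in> I \<Longrightarrow> y i \<in> P i"
proof -
  have "\<exists>y. inj_on y I \<and> (\<forall>i\<in>I. y i \<in> P i)"
    using assms
  proof (induction I rule: finite_induct)
    case (insert a F)
    then obtain y where y: "inj_on y F" "\<forall>i\<in>F. y i \<in> P i" by auto
    obtain x where "x \<in> P a" using insert.prems by blast
    then have "infinite (P a)"
      using infinite_openin[of UNIV "P a" x] insert.prems by simp
    then obtain z where z: "z \<in> P a" "z \<notin> y ` F"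
      using insert.hyps(1) infinite_imp_nonempty[OF Diff_infinite_finite[of "y ` F" "P a"]] by blast
    show ?case
      using y z insert.hyps(2) by (intro exI[of _ "y(a := z)"]) (auto simp: inj_on_def)
  qed simp
  then show thesis using that by blast
qed

lemma separated_open_subsets:
  fixes P :: "'i \<Rightarrow> 'a::{metric_space, perfect_space} set"
  assumes "finite I" "\<And>i. i \<in> I \<Longrightarrow> open (P i)" "\<And>i. i \<in> I \<Longrightarrow> P i \<noteq> {}"
  obtains Q \<delta> where "\<And>i. i \<in> I \<Longrightarrow> open (Q i)" "\<And>i. i \<in> I \<Longrightarrow> Q i \<noteq> {}"
    "\<And>i. i \<in> I \<Longrightarrow> Q i \<subseteq> P i" "\<delta> > 0"
    "\<And>i j x y. i \<in> I \<Longrightarrow> j \<in> I \<Longrightarrow> i \<noteq> j \<Longrightarrow> x \<in> Q i \<Longrightarrow> y \<in> Q j \<Longrightarrow> \<delta> \<le> dist x y"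
proof -
  obtain y where y: "inj_on y I" "\<And>i. i \<in> I \<Longrightarrow> y i \<in> P i"
    using finite_inj_points_in_open assms by blast
  have far: "eventually (\<lambda>r. r < dist (y i) (y j) / 3) (at_right 0)" if "i \<in> I" "j \<in> I - {i}" for i j
    using y(1) that by (intro eventually_at_right_less_const) (auto simp: inj_on_def)
  have "eventually (\<lambda>r. \<forall>i\<in>I. cball (y i) r \<subseteq> P i \<and> (\<forall>j\<in>I - {i}. r < dist (y i) (y j) / 3)) (at_right 0)"
    using assms y far by (intro eventually_ball_finite ballI eventually_conj eventually_cball_subset) auto
  then obtain r where r: "r > 0" "\<And>i. i \<in> I \<Longrightarrow> cball (y i) r \<subseteq> P i"
    "\<And>i j. i \<in> I \<Longrightarrow> j \<in> I \<Longrightarrow> i \<noteq> j \<Longrightarrow> 3 * r < dist (y i) (y j)"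
    by (rule at_right_zero_witness) (auto simp: mult.commute)
  show thesis
  proof (rule that[of "\<lambda>i. ball (y i) r" r])
    show "r \<le> dist x z" if "i \<in> I" "j \<in> I" "i \<noteq> j" "x \<in> ball (y i) r" "z \<in> ball (y j) r" for i j x z
      using r(3)[OF that(1-3)] that(4,5) dist_triangle[of "y i" "y j" z] dist_triangle[of "y i" z x]
      by (simp add: dist_commute)
    show "ball (y i) r \<subseteq> P i" if "i \<in> I" for i
      using r(2)[OF that] ball_subset_cball by blast
  qed (use r in auto)
qed

lemma continuous_on_funpow:
  fixes f :: "'a::topological_space \<Rightarrow> 'a"
  assumes "continuous_on UNIV f"
  shows "continuous_on UNIV (f ^^ n)"
proof (induction n)
  case (Suc n)
  then show ?case
    using continuous_on_compose[OF Suc, of f] assms by (simp add: continuous_on_subset)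
qed (simp add: continuous_on_id')

lemma eventually_ball_image_dist_less:
  assumes "isCont g x" "e > 0"
  shows "eventually (\<lambda>r. \<forall>z\<in>ball x r. dist (g z) (g x) < e) (at_right 0)"
proof -
  obtain d where "d > 0" "\<And>z. dist z x < d \<Longrightarrow> dist (g z) (g x) < e"
    using assms unfolding continuous_at_eps_delta by blast
  then show ?thesis
    unfolding eventually_at_right_field by (intro exI[of _ d]) (auto simp: dist_commute)
qed

lemma small_balls_at_points:
  fixes g :: "'a::metric_space \<Rightarrow> 'b::metric_space"
  assumes I: "finite I" and P: "\<And>i. i \<in> I \<Longrightarrow> open (P i)" and x: "\<And>i. i \<in> I \<Longrightarrow> x i \<in> P i"
    and g: "continuous_on UNIV g" and "e > 0"
  obtains r where "r > 0" "r < e" "\<And>i. i \<in> I \<Longrightarrow> cball (x i) r \<subseteq> P i"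
    "\<And>i z. i \<in> I \<Longrightarrow> z \<in> ball (x i) r \<Longrightarrow> dist (g z) (g (x i)) < e"
proof -
  have "isCont g z" for z
    using g by (simp add: continuous_on_eq_continuous_at)
  then have "eventually (\<lambda>r. cball (x i) r \<subseteq> P i \<and> (\<forall>z\<in>ball (x i) r. dist (g z) (g (x i)) < e)) (at_right 0)"
    if "i \<in> I" for i
    using eventually_conj[OF eventually_cball_subset[OF P[OF that] x[OF that]]
        eventually_ball_image_dist_less[OF _ \<open>e > 0\<close>]] by blast
  then have "eventually (\<lambda>r. r < e \<and> (\<forall>i\<in>I. cball (x i) r \<subseteq> P i \<and>
      (\<forall>z\<in>ball (x i) r. dist (g z) (g (x i)) < e))) (at_right 0)"
    using I \<open>e > 0\<close> by (intro eventually_conj eventually_at_right_less_const) (simp_all add: eventually_ball_finite)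
  then obtain r where "r > 0" and r: "r < e \<and> (\<forall>i\<in>I. cball (x i) r \<subseteq> P i \<and>
      (\<forall>z\<in>ball (x i) r. dist (g z) (g (x i)) < e))"
    by (rule at_right_zero_witness) auto
  then show thesis using that[of r] by blast
qed

section \<open>Proximal tuples\<close>

definition Prox_dense :: "('a::metric_space \<Rightarrow> 'a) \<Rightarrow> bool" where
  "Prox_dense f \<longleftrightarrow> (\<forall>k\<ge>2. (product_topology (\<lambda>_. euclidean) {..<k}) closure_of (Prox k f)
                      = topspace (product_topology (\<lambda>_. euclidean) {..<k}))"

lemma liminf_ereal_eq_0_iff:
  fixes X :: "nat \<Rightarrow> real"
  assumes "\<And>n. 0 \<le> X n"
  shows "liminf (\<lambda>n. ereal (X n)) = 0 \<longleftrightarrow> (\<forall>e>0. \<exists>\<^sub>F n in sequentially. X n < e)"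
proof
  assume lim: "liminf (\<lambda>n. ereal (X n)) = 0"
  show "\<forall>e>0. \<exists>\<^sub>F n in sequentially. X n < e"
  proof (intro allI impI)
    fix e :: real assume "e > 0"
    show "\<exists>\<^sub>F n in sequentially. X n < e"
    proof (rule ccontr)
      assume "\<not> (\<exists>\<^sub>F n in sequentially. X n < e)"
      then have "eventually (\<lambda>n. ereal e \<le> ereal (X n)) sequentially"
        by (simp add: not_frequently not_less)
      then have "ereal e \<le> liminf (\<lambda>n. ereal (X n))" by (rule Liminf_bounded)
      with lim \<open>e > 0\<close> show False by simp
    qed
  qed
next
  assume small: "\<forall>e>0. \<exists>\<^sub>F n in sequentially. X n < e"
  have "0 \<le> liminf (\<lambda>n. ereal (X n))" by (rule Liminf_bounded) (simp add: assms)
  moreover have "\<not> 0 < liminf (\<lambda>n. ereal (X n))"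
  proof
    assume "0 < liminf (\<lambda>n. ereal (X n))"
    then obtain e where e: "0 < ereal e" "ereal e < liminf (\<lambda>n. ereal (X n))"
      using ereal_dense2 by blast
    have "eventually (\<lambda>n. \<not> X n < e) sequentially"
      using less_LiminfD[OF e(2)] by (rule eventually_mono) simp
    with small e(1) show False by (simp add: not_frequently[symmetric])
  qed
  ultimately show "liminf (\<lambda>n. ereal (X n)) = 0" by simp
qed

lemma mem_Prox_iff:
  fixes f :: "'a::metric_space \<Rightarrow> 'a"
  assumes "k \<ge> 2"
  shows "x \<in> Prox k f \<longleftrightarrow> x \<in> PiE {..<k} (\<lambda>_. UNIV) \<and>
    (\<forall>e>0. \<exists>\<^sub>F n in sequentially. \<forall>i j. i < j \<longrightarrow> j < k \<longrightarrow> dist ((f ^^ n) (x i)) ((f ^^ n) (x j)) < e)"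
proof -
  define D where "D n = {dist ((f ^^ n) (x i)) ((f ^^ n) (x j)) | i j. i < j \<and> j < k}" for n
  have fin: "finite (D n)" for n
  proof (rule finite_subset)
    show "D n \<subseteq> (\<lambda>(i, j). dist ((f ^^ n) (x i)) ((f ^^ n) (x j))) ` ({..<k} \<times> {..<k})"
      unfolding D_def by auto
  qed simp
  have ne: "dist ((f ^^ n) (x 0)) ((f ^^ n) (x 1)) \<in> D n" for n
    unfolding D_def using assms by force
  have Max_less: "Max (D n) < e \<longleftrightarrow> (\<forall>i j. i < j \<longrightarrow> j < k \<longrightarrow> dist ((f ^^ n) (x i)) ((f ^^ n) (x j)) < e)"
    for n e
  proof -
    have "D n \<noteq> {}" using ne by blast
    then show ?thesis unfolding Max_less_iff[OF fin \<open>D n \<noteq> {}\<close>] by (auto simp: D_def)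
  qed
  have "0 \<le> Max (D n)" for n
    using Max_ge[OF fin ne] zero_le_dist order_trans by blast
  then have "liminf (\<lambda>n. ereal (Max (D n))) = 0 \<longleftrightarrow>
      (\<forall>e>0. \<exists>\<^sub>F n in sequentially. \<forall>i j. i < j \<longrightarrow> j < k \<longrightarrow> dist ((f ^^ n) (x i)) ((f ^^ n) (x j)) < e)"
    by (simp add: liminf_ereal_eq_0_iff Max_less)
  then show ?thesis unfolding Prox_def D_def by simp
qed

lemma Prox_dense_synchronized_points:
  fixes f :: "'a::metric_space \<Rightarrow> 'a" and P :: "'i \<Rightarrow> 'a set"
  assumes dense: "Prox_dense f"
    and I: "finite I" and P: "\<And>i. i \<in> I \<Longrightarrow> open (P i)" "\<And>i. i \<in> I \<Longrightarrow> P i \<noteq> {}"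
    and "\<epsilon> > 0"
  obtains x p where "\<And>i. i \<in> I \<Longrightarrow> x i \<in> P i"
    "\<And>i j. i \<in> I \<Longrightarrow> j \<in> I \<Longrightarrow> dist ((f ^^ p) (x i)) ((f ^^ p) (x j)) < \<epsilon>"
proof -
  define m where "m = card I"
  obtain h where h: "bij_betw h {..<m} I"
    using ex_bij_betw_nat_finite[OF I] unfolding m_def lessThan_atLeast0 by blast
  \<comment> \<open>Two unconstrained extra coordinates make \<open>k \<ge> 2\<close> even if \<open>I\<close> has fewer than two elements.\<close>
  define k where "k = m + 2"
  define T where "T = PiE {..<k} (\<lambda>l. if l < m then P (h l) else UNIV)"
  have "T \<noteq> {}"
    unfolding T_def using P(2) bij_betwE[OF h] by (simp add: PiE_eq_empty_iff)
  moreover have "openin (product_topology (\<lambda>_. euclidean) {..<k}) T"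
    unfolding T_def using P(1) bij_betwE[OF h] by (subst openin_PiE) auto
  moreover have "k \<ge> 2" unfolding k_def by simp
  ultimately have "Prox k f \<inter> T \<noteq> {}"
    using dense unfolding Prox_dense_def dense_intersects_open by blast
  then obtain w where w: "w \<in> Prox k f" "w \<in> T" by blast
  then have "\<exists>\<^sub>F n in sequentially. \<forall>l l'. l < l' \<longrightarrow> l' < k \<longrightarrow> dist ((f ^^ n) (w l)) ((f ^^ n) (w l')) < \<epsilon>"
    using mem_Prox_iff[OF \<open>k \<ge> 2\<close>] \<open>\<epsilon> > 0\<close> by blast
  then obtain p where p: "\<forall>l l'. l < l' \<longrightarrow> l' < k \<longrightarrow> dist ((f ^^ p) (w l)) ((f ^^ p) (w l')) < \<epsilon>"
    using frequently_ex by blast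
  have close: "dist ((f ^^ p) (w l)) ((f ^^ p) (w l')) < \<epsilon>" if "l < k" "l' < k" for l l'
    using p that \<open>\<epsilon> > 0\<close> by (metis dist_commute dist_self linorder_neqE_nat)
  define x where "x i = w (inv_into {..<m} h i)" for i
  have inv: "inv_into {..<m} h i < m" "h (inv_into {..<m} h i) = i" if "i \<in> I" for i
    using h that by (auto simp: bij_betw_def inv_into_into f_inv_into_f)
  show thesis
  proof (rule that[of x p])
    show "x i \<in> P i" if "i \<in> I" for i
      using PiE_mem[OF w(2)[unfolded T_def], of "inv_into {..<m} h i"] inv[OF that]
      unfolding x_def k_def by simp
    show "dist ((f ^^ p) (x i)) ((f ^^ p) (x j)) < \<epsilon>" if "i \<in> I" "j \<in> I" for i j
      using close inv(1)[OF that(1)] inv(1)[OF that(2)] unfolding x_def k_def by simp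
  qed
qed

lemma Prox_dense_refine:
  fixes f :: "'a::{metric_space, perfect_space} \<Rightarrow> 'a" and P :: "'i \<Rightarrow> 'a set"
  assumes dense: "Prox_dense f" and cont: "continuous_on UNIV f"
    and I: "finite I" and P: "\<And>i. i \<in> I \<Longrightarrow> open (P i)" "\<And>i. i \<in> I \<Longrightarrow> P i \<noteq> {}"
    and "\<epsilon> > 0"
  obtains \<delta> Q p where "\<delta> > 0"
    "\<And>i. i \<in> I \<Longrightarrow> open (Q i)" "\<And>i. i \<in> I \<Longrightarrow> Q i \<noteq> {}" "\<And>i. i \<in> I \<Longrightarrow> closure (Q i) \<subseteq> P i"
    "\<And>i x y. i \<in> I \<Longrightarrow> x \<in> Q i \<Longrightarrow> y \<in> Q i \<Longrightarrow> dist x y < \<epsilon>"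
    "\<And>i j x y. i \<in> I \<Longrightarrow> j \<in> I \<Longrightarrow> i \<noteq> j \<Longrightarrow> x \<in> Q i \<Longrightarrow> y \<in> Q j \<Longrightarrow> \<delta> \<le> dist x y"
    "\<And>i j x y. i \<in> I \<Longrightarrow> j \<in> I \<Longrightarrow> x \<in> Q i \<Longrightarrow> y \<in> Q j
       \<Longrightarrow> dist ((f ^^ p) x) ((f ^^ p) y) < \<epsilon>"
proof -
  obtain P' \<delta> where P': "\<And>i. i \<in> I \<Longrightarrow> open (P' i)" "\<And>i. i \<in> I \<Longrightarrow> P' i \<noteq> {}"
    "\<And>i. i \<in> I \<Longrightarrow> P' i \<subseteq> P i"
    and \<delta>: "\<delta> > 0"
    and separated: "\<And>i j x y. i \<in> I \<Longrightarrow> j \<in> I \<Longrightarrow> i \<noteq> j \<Longrightarrow> x \<in> P' i \<Longrightarrow> y \<in> P' j \<Longrightarrow> \<delta> \<le> dist x y"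
    using separated_open_subsets[of I P] I P by blast
  have "\<epsilon> / 3 > 0" using \<open>\<epsilon> > 0\<close> by simp
  obtain x p where x: "\<And>i. i \<in> I \<Longrightarrow> x i \<in> P' i"
    and close: "\<And>i j. i \<in> I \<Longrightarrow> j \<in> I \<Longrightarrow> dist ((f ^^ p) (x i)) ((f ^^ p) (x j)) < \<epsilon> / 3"
    using dense I P'(1,2) \<open>\<epsilon> / 3 > 0\<close> by (rule Prox_dense_synchronized_points) auto
  obtain r where "r > 0" "r < \<epsilon> / 3" and r_sub: "\<And>i. i \<in> I \<Longrightarrow> cball (x i) r \<subseteq> P' i"
    and r_img: "\<And>i z. i \<in> I \<Longrightarrow> z \<in> ball (x i) r \<Longrightarrow> dist ((f ^^ p) z) ((f ^^ p) (x i)) < \<epsilon> / 3"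
    using I P'(1) x continuous_on_funpow[OF cont] \<open>\<epsilon> / 3 > 0\<close> by (rule small_balls_at_points) auto
  show thesis
  proof (rule that[of \<delta> "\<lambda>i. ball (x i) r" p])
    show "closure (ball (x i) r) \<subseteq> P i" if "i \<in> I" for i
      using closure_minimal[OF ball_subset_cball closed_cball, of "x i" r] r_sub P'(3) that by blast
    show "dist u v < \<epsilon>" if "i \<in> I" "u \<in> ball (x i) r" "v \<in> ball (x i) r" for i u v
      using that \<open>r > 0\<close> \<open>r < \<epsilon> / 3\<close> dist_triangle[of u v "x i"] by (simp add: dist_commute)
    show "\<delta> \<le> dist u v" if "i \<in> I" "j \<in> I" "i \<noteq> j" "u \<in> ball (x i) r" "v \<in> ball (x j) r" for i j u v
      using separated[OF that(1-3)] r_sub ball_subset_cball that by blast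
    show "dist ((f ^^ p) u) ((f ^^ p) v) < \<epsilon>"
      if "i \<in> I" "j \<in> I" "u \<in> ball (x i) r" "v \<in> ball (x j) r" for i j u v
      using r_img[OF that(1,3)] r_img[OF that(2,4)] close[OF that(1,2)]
        dist_triangle[of "(f ^^ p) u" "(f ^^ p) v" "(f ^^ p) (x i)"]
        dist_triangle[of "(f ^^ p) (x i)" "(f ^^ p) v" "(f ^^ p) (x j)"]
      by (simp add: dist_commute)
  qed (use \<delta> \<open>r > 0\<close> in auto)
qed

section \<open>Synchronized Cantor schemes from dense proximality\<close>

text \<open>The pair \<open>(j, w)\<close> indexes the cell \<open>w\<close> of scheme \<open>j\<close>, which is built at stage \<open>j + length w\<close>.\<close>

definition scheme_level :: "nat \<Rightarrow> (nat \<times> bool list) set" where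
  "scheme_level n = {(j, w). j + length w = n}"

lemma finite_scheme_level: "finite (scheme_level n)"
proof (rule finite_subset)
  show "scheme_level n \<subseteq> {..n} \<times> {w :: bool list. set w \<subseteq> UNIV \<and> length w \<le> n}"
    unfolding scheme_level_def by auto
  show "finite ({..n} \<times> {w :: bool list. set w \<subseteq> UNIV \<and> length w \<le> n})"
    by (intro finite_cartesian_product finite_lists_length_le) auto
qed

definition synchronized_stage :: "('a::metric_space \<Rightarrow> 'a) \<Rightarrow> nat \<Rightarrow> (nat \<times> bool list \<Rightarrow> 'a set) \<Rightarrow> bool"
  where "synchronized_stage f n U \<longleftrightarrow>
    (\<forall>i\<in>scheme_level n. open (U i) \<and> U i \<noteq> {} \<and> (\<forall>x\<in>U i. \<forall>y\<in>U i. dist x y < 1 / Suc n)) \<and>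
    (\<exists>\<delta>>0. \<forall>i\<in>scheme_level n. \<forall>i'\<in>scheme_level n. i \<noteq> i' \<longrightarrow> (\<forall>x\<in>U i. \<forall>y\<in>U i'. \<delta> \<le> dist x y)) \<and>
    (\<exists>q. \<forall>i\<in>scheme_level n. \<forall>i'\<in>scheme_level n. \<forall>x\<in>U i. \<forall>y\<in>U i'.
        dist ((f ^^ q) x) ((f ^^ q) y) < 1 / Suc n)"

lemma Prox_dense_synchronized_stage:
  fixes f :: "'a::{metric_space, perfect_space} \<Rightarrow> 'a"
  assumes dense: "Prox_dense f" and cont: "continuous_on UNIV f"
    and P: "\<And>i. i \<in> scheme_level n \<Longrightarrow> open (P i)" "\<And>i. i \<in> scheme_level n \<Longrightarrow> P i \<noteq> {}"
  shows "\<exists>U. synchronized_stage f n U \<and> (\<forall>i\<in>scheme_level n. closure (U i) \<subseteq> P i)"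
proof -
  have "(0::real) < 1 / Suc n" by simp
  with P obtain \<delta> U q where "\<delta> > 0" and open_U: "\<And>i. i \<in> scheme_level n \<Longrightarrow> open (U i)"
    and nonempty_U: "\<And>i. i \<in> scheme_level n \<Longrightarrow> U i \<noteq> {}"
    and closure_U: "\<And>i. i \<in> scheme_level n \<Longrightarrow> closure (U i) \<subseteq> P i"
    and small_U: "\<And>i x y. i \<in> scheme_level n \<Longrightarrow> x \<in> U i \<Longrightarrow> y \<in> U i \<Longrightarrow> dist x y < 1 / Suc n"
    and separated_U: "\<And>i j x y. i \<in> scheme_level n \<Longrightarrow> j \<in> scheme_level n \<Longrightarrow> i \<noteq> j
       \<Longrightarrow> x \<in> U i \<Longrightarrow> y \<in> U j \<Longrightarrow> \<delta> \<le> dist x y"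
    and close_U: "\<And>i j x y. i \<in> scheme_level n \<Longrightarrow> j \<in> scheme_level n \<Longrightarrow> x \<in> U i \<Longrightarrow> y \<in> U j
       \<Longrightarrow> dist ((f ^^ q) x) ((f ^^ q) y) < 1 / Suc n"
    using Prox_dense_refine[where P = P and \<epsilon> = "1 / Suc n", OF dense cont finite_scheme_level[of n]]
    by blast
  have "synchronized_stage f n U"
    unfolding synchronized_stage_def
  proof (intro conjI)
    show "\<exists>\<delta>>0. \<forall>i\<in>scheme_level n. \<forall>i'\<in>scheme_level n. i \<noteq> i' \<longrightarrow> (\<forall>x\<in>U i. \<forall>y\<in>U i'. \<delta> \<le> dist x y)"
      using \<open>\<delta> > 0\<close> separated_U by blast
    show "\<exists>q. \<forall>i\<in>scheme_level n. \<forall>i'\<in>scheme_level n. \<forall>x\<in>U i. \<forall>y\<in>U i'.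
        dist ((f ^^ q) x) ((f ^^ q) y) < 1 / Suc n"
      using close_U by blast
  qed (use open_U nonempty_U small_U in blast)
  with closure_U show ?thesis by blast
qed

definition scheme_parent :: "(nat \<Rightarrow> 'a set) \<Rightarrow> (nat \<times> bool list \<Rightarrow> 'a set) \<Rightarrow> nat \<times> bool list \<Rightarrow> 'a set"
  where "scheme_parent B U = (\<lambda>(j, w). if w = [] then B j else U (j, butlast w))"

lemma scheme_parent_Nil [simp]: "scheme_parent B U (j, []) = B j"
  and scheme_parent_snoc [simp]: "scheme_parent B U (j, w @ [b]) = U (j, w)"
  unfolding scheme_parent_def by simp_all

lemma synchronized_stage_open:
  assumes "synchronized_stage f n U" "i \<in> scheme_level n"
  shows "open (U i)" "U i \<noteq> {}"
  using assms unfolding synchronized_stage_def by auto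

lemma synchronized_stage_small:
  assumes "synchronized_stage f n U" "i \<in> scheme_level n" "x \<in> U i" "y \<in> U i"
  shows "dist x y < 1 / Suc n"
  using assms unfolding synchronized_stage_def by auto

lemma open_scheme_parent:
  assumes "synchronized_stage f n U" "\<And>j. open (B j)" "\<And>j. B j \<noteq> {}" "i \<in> scheme_level (Suc n)"
  shows "open (scheme_parent B U i)" "scheme_parent B U i \<noteq> {}"
proof -
  obtain j w where i: "i = (j, w)" by (cases i)
  have "open (scheme_parent B U (j, w)) \<and> scheme_parent B U (j, w) \<noteq> {}"
  proof (cases w rule: rev_cases)
    case (snoc v b)
    then have "(j, v) \<in> scheme_level n" using assms(4) unfolding i by (simp add: scheme_level_def)
    then show ?thesis using synchronized_stage_open[OF assms(1)] unfolding snoc by simp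
  qed (use assms(2,3) in simp)
  then show "open (scheme_parent B U i)" "scheme_parent B U i \<noteq> {}" unfolding i by simp_all
qed

definition synchronized_cantor_schemes ::
    "('a::metric_space \<Rightarrow> 'a) \<Rightarrow> (nat \<Rightarrow> 'a set) \<Rightarrow> (nat \<Rightarrow> bool list \<Rightarrow> 'a set) \<Rightarrow> (nat \<Rightarrow> nat) \<Rightarrow> bool"
  where "synchronized_cantor_schemes f B V p \<longleftrightarrow>
    (\<forall>j w. V j w \<noteq> {}) \<and> (\<forall>j. closure (V j []) \<subseteq> B j) \<and> (\<forall>j w b. closure (V j (w @ [b])) \<subseteq> V j w) \<and>
    (\<forall>j w. \<forall>x\<in>V j w. \<forall>y\<in>V j w. dist x y < 1 / Suc (j + length w)) \<and>
    (\<exists>\<delta>. (\<forall>n. \<delta> n > 0) \<and> (\<forall>j w j' w'. j + length w = j' + length w' \<longrightarrow> (j, w) \<noteq> (j', w') \<longrightarrow>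
        (\<forall>x\<in>V j w. \<forall>y\<in>V j' w'. \<delta> (j + length w) \<le> dist x y))) \<and>
    (\<forall>j w j' w'. j + length w = j' + length w' \<longrightarrow> (\<forall>x\<in>V j w. \<forall>y\<in>V j' w'.
        dist ((f ^^ p (j + length w)) x) ((f ^^ p (j + length w)) y) < 1 / Suc (j + length w)))"

lemma synchronized_stages_imp_cantor_schemes:
  assumes stage: "\<And>n. synchronized_stage f n (S n)" and root: "\<And>n. closure (S n (n, [])) \<subseteq> B n"
    and nested: "\<And>n i. i \<in> scheme_level (Suc n) \<Longrightarrow> closure (S (Suc n) i) \<subseteq> scheme_parent B (S n) i"
  shows "\<exists>p. synchronized_cantor_schemes f B (\<lambda>j w. S (j + length w) (j, w)) p"
proof -
  have "\<exists>\<delta>>0. \<forall>i\<in>scheme_level n. \<forall>i'\<in>scheme_level n. i \<noteq> i' \<longrightarrow> (\<forall>x\<in>S n i. \<forall>y\<in>S n i'. \<delta> \<le> dist x y)"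
    for n using stage[of n] unfolding synchronized_stage_def by (elim conjE)
  then obtain \<delta> where \<delta>: "\<And>n. \<delta> n > 0" and separated: "\<And>n i i' x y. i \<in> scheme_level n \<Longrightarrow> i' \<in> scheme_level n
      \<Longrightarrow> i \<noteq> i' \<Longrightarrow> x \<in> S n i \<Longrightarrow> y \<in> S n i' \<Longrightarrow> \<delta> n \<le> dist x y"
    by metis
  have "\<exists>q. \<forall>i\<in>scheme_level n. \<forall>i'\<in>scheme_level n. \<forall>x\<in>S n i. \<forall>y\<in>S n i'.
      dist ((f ^^ q) x) ((f ^^ q) y) < 1 / Suc n" for n
    using stage[of n] unfolding synchronized_stage_def by (elim conjE)
  then obtain p where close: "\<And>n i i' x y. i \<in> scheme_level n \<Longrightarrow> i' \<in> scheme_level n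
      \<Longrightarrow> x \<in> S n i \<Longrightarrow> y \<in> S n i' \<Longrightarrow> dist ((f ^^ p n) x) ((f ^^ p n) y) < 1 / Suc n"
    by metis
  have level: "(j, w) \<in> scheme_level (j + length w)" for j w by (simp add: scheme_level_def)
  have level': "(j', w') \<in> scheme_level (j + length w)" if "j + length w = j' + length w'" for j w j' w'
    using that by (simp add: scheme_level_def)
  have "synchronized_cantor_schemes f B (\<lambda>j w. S (j + length w) (j, w)) p"
    unfolding synchronized_cantor_schemes_def
  proof (intro conjI allI ballI impI exI[of _ \<delta>])
    show "S (j + length w) (j, w) \<noteq> {}" for j w
      using synchronized_stage_open[OF stage level] by blast
    show "closure (S (j + length []) (j, [])) \<subseteq> B j" for j using root by simp
    show "closure (S (j + length (w @ [b])) (j, w @ [b])) \<subseteq> S (j + length w) (j, w)" for j w b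
      using nested[of "(j, w @ [b])" "j + length w"] level[of j "w @ [b]"] by simp
    show "dist x y < 1 / Suc (j + length w)"
      if "x \<in> S (j + length w) (j, w)" "y \<in> S (j + length w) (j, w)" for j w x y
      using synchronized_stage_small[OF stage level that] .
    show "\<delta> (j + length w) \<le> dist x y"
      if "j + length w = j' + length w'" "(j, w) \<noteq> (j', w')"
        "x \<in> S (j + length w) (j, w)" "y \<in> S (j' + length w') (j', w')" for j w j' w' x y
      using separated[OF level level'[OF that(1)] that(2,3)] that(1,4) by simp
    show "dist ((f ^^ p (j + length w)) x) ((f ^^ p (j + length w)) y) < 1 / Suc (j + length w)"
      if "j + length w = j' + length w'"
        "x \<in> S (j + length w) (j, w)" "y \<in> S (j' + length w') (j', w')" for j w j' w' x y
      using close[OF level level'[OF that(1)] that(2)] that(1,3) by simp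
  qed (use \<delta> in blast)
  then show ?thesis by blast
qed

lemma Prox_dense_imp_synchronized_cantor_schemes:
  fixes f :: "'a::{metric_space, perfect_space} \<Rightarrow> 'a" and B :: "nat \<Rightarrow> 'a set"
  assumes dense: "Prox_dense f" and cont: "continuous_on UNIV f"
    and B: "\<And>j. open (B j)" "\<And>j. B j \<noteq> {}"
  shows "\<exists>V p. synchronized_cantor_schemes f B V p"
proof -
  have "\<exists>S. \<forall>n. (synchronized_stage f n (S n) \<and> closure (S n (n, [])) \<subseteq> B n) \<and>
      (\<forall>i\<in>scheme_level (Suc n). closure (S (Suc n) i) \<subseteq> scheme_parent B (S n) i)"
  proof (rule dependent_nat_choice)
    have "scheme_level 0 = {(0, [])}" by (auto simp: scheme_level_def)
    then show "\<exists>U. synchronized_stage f 0 U \<and> closure (U (0, [])) \<subseteq> B 0"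
      using Prox_dense_synchronized_stage[OF dense cont, of 0 "\<lambda>_. B 0"] B by auto
  next
    fix U n assume "synchronized_stage f n U \<and> closure (U (n, [])) \<subseteq> B n"
    then have "open (scheme_parent B U i)" "scheme_parent B U i \<noteq> {}" if "i \<in> scheme_level (Suc n)" for i
      using open_scheme_parent[where B = B, OF _ B that] by blast+
    then obtain U' where U': "synchronized_stage f (Suc n) U'"
      and closure_U': "\<forall>i\<in>scheme_level (Suc n). closure (U' i) \<subseteq> scheme_parent B U i"
      using Prox_dense_synchronized_stage[OF dense cont, of "Suc n" "scheme_parent B U"] by blast
    have "(Suc n, []) \<in> scheme_level (Suc n)" by (simp add: scheme_level_def)
    with closure_U' have "closure (U' (Suc n, [])) \<subseteq> B (Suc n)" by fastforce
    with U' closure_U' show "\<exists>U'. (synchronized_stage f (Suc n) U' \<and> closure (U' (Suc n, [])) \<subseteq> B (Suc n)) \<and>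
        (\<forall>i\<in>scheme_level (Suc n). closure (U' i) \<subseteq> scheme_parent B U i)"
      by blast
  qed
  then obtain S where "\<And>n. synchronized_stage f n (S n)" "\<And>n. closure (S n (n, [])) \<subseteq> B n"
    "\<And>n i. i \<in> scheme_level (Suc n) \<Longrightarrow> closure (S (Suc n) i) \<subseteq> scheme_parent B (S n) i"
    by blast
  from synchronized_stages_imp_cantor_schemes[OF this] show ?thesis by blast
qed

lemma synchronized_cantor_schemes_embedding:
  fixes f :: "'a::complete_space \<Rightarrow> 'a"
  assumes schemes: "synchronized_cantor_schemes f B V p"
  shows "\<exists>K. K homeomorphic cantor_ternary_set \<and> K \<noteq> {} \<and> (\<forall>x\<in>K. \<forall>n. \<exists>w. length w = n \<and> x \<in> V j w)"
proof -
  have nonempty: "\<And>w. V j w \<noteq> {}" and nested: "\<And>w b. closure (V j (w @ [b])) \<subseteq> V j w"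
    and small: "\<And>w x y. x \<in> V j w \<Longrightarrow> y \<in> V j w \<Longrightarrow> dist x y < 1 / Suc (j + length w)"
    using schemes unfolding synchronized_cantor_schemes_def by simp_all
  obtain \<delta> where \<delta>: "\<And>n. \<delta> n > 0"
    and separated: "\<And>j w j' w' x y. j + length w = j' + length w' \<Longrightarrow> (j, w) \<noteq> (j', w') \<Longrightarrow> x \<in> V j w
       \<Longrightarrow> y \<in> V j' w' \<Longrightarrow> \<delta> (j + length w) \<le> dist x y"
    using schemes unfolding synchronized_cantor_schemes_def by metis
  show ?thesis
  proof (rule cantor_scheme_embedding[of "V j" "\<lambda>l. \<delta> (j + l)"])
    show "dist x y < 1 / Suc (length w)" if "x \<in> V j w" "y \<in> V j w" for w x y
    proof -
      have "1 / Suc (j + length w) \<le> 1 / Suc (length w)" by (simp add: frac_le)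
      with small[OF that] show ?thesis by linarith
    qed
    show "\<delta> (j + length w) \<le> dist x y"
      if "length w = length w'" "w \<noteq> w'" "x \<in> V j w" "y \<in> V j w'" for w w' x y
      using separated[of j w j w' x y] that by simp
    show "\<exists>K. K homeomorphic cantor_ternary_set \<and> K \<noteq> {} \<and> (\<forall>x\<in>K. \<forall>n. \<exists>w. length w = n \<and> x \<in> V j w)"
      if "K homeomorphic cantor_ternary_set" "K \<noteq> {}" "\<And>x n. x \<in> K \<Longrightarrow> \<exists>w. length w = n \<and> x \<in> V j w"
      for K
      using that by blast
  qed (use nonempty nested \<delta> in auto)
qed

lemma synchronized_cantor_schemes_cantor_sets:
  fixes f :: "'a::complete_space \<Rightarrow> 'a"
  assumes schemes: "synchronized_cantor_schemes f B V p"
  obtains K where "\<And>j. K j homeomorphic cantor_ternary_set" "\<And>j. K j \<noteq> {}" "\<And>j. K j \<subseteq> B j"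
    "\<And>i j n x y. max i j \<le> n \<Longrightarrow> x \<in> K i \<Longrightarrow> y \<in> K j \<Longrightarrow> dist ((f ^^ p n) x) ((f ^^ p n) y) < 1 / Suc n"
proof -
  have root: "\<And>j. closure (V j []) \<subseteq> B j"
    and close: "\<And>j w j' w' x y. j + length w = j' + length w' \<Longrightarrow> x \<in> V j w \<Longrightarrow> y \<in> V j' w'
       \<Longrightarrow> dist ((f ^^ p (j + length w)) x) ((f ^^ p (j + length w)) y) < 1 / Suc (j + length w)"
    using schemes unfolding synchronized_cantor_schemes_def by simp_all
  have "\<exists>K. \<forall>j. K j homeomorphic cantor_ternary_set \<and> K j \<noteq> {} \<and>
      (\<forall>x\<in>K j. \<forall>n. \<exists>w. length w = n \<and> x \<in> V j w)"
    using synchronized_cantor_schemes_embedding[OF schemes] by (intro choice allI)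
  then obtain K where K: "\<And>j. K j homeomorphic cantor_ternary_set" "\<And>j. K j \<noteq> {}"
    and K_levels: "\<And>j x n. x \<in> K j \<Longrightarrow> \<exists>w. length w = n \<and> x \<in> V j w"
    by blast
  show thesis
  proof (rule that[OF K])
    show "K j \<subseteq> B j" for j
    proof
      fix x assume "x \<in> K j"
      then have "x \<in> V j []" using K_levels[of x j 0] by simp
      then show "x \<in> B j" using root[of j] closure_subset by blast
    qed
    show "dist ((f ^^ p n) x) ((f ^^ p n) y) < 1 / Suc n"
      if n: "max i j \<le> n" and x: "x \<in> K i" and y: "y \<in> K j" for i j n x y
    proof -
      obtain w where "length w = n - i" "x \<in> V i w" using K_levels[OF x] by blast
      moreover obtain w' where "length w' = n - j" "y \<in> V j w'" using K_levels[OF y] by blast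
      ultimately show ?thesis using close[of i w j w' x y] n by simp
    qed
  qed
qed

lemma synchronized_cantor_schemes_imp_sigma_cantor:
  fixes f :: "'a::complete_space \<Rightarrow> 'a" and B :: "nat \<Rightarrow> 'a set"
  assumes B_base: "\<And>T. open T \<Longrightarrow> T \<noteq> {} \<Longrightarrow> \<exists>j. B j \<subseteq> T"
    and schemes: "synchronized_cantor_schemes f B V p"
  shows "\<exists>S. sigma_cantor S \<and> closure S = UNIV \<and>
           (\<forall>x\<in>S. \<forall>y\<in>S. (\<lambda>n. dist ((f ^^ p n) x) ((f ^^ p n) y)) \<longlonglongrightarrow> 0)"
proof -
  obtain K where K: "\<And>j. K j homeomorphic cantor_ternary_set" "\<And>j. K j \<noteq> {}" "\<And>j. K j \<subseteq> B j"
    and close: "\<And>i j n x y. max i j \<le> n \<Longrightarrow> x \<in> K i \<Longrightarrow> y \<in> K j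
      \<Longrightarrow> dist ((f ^^ p n) x) ((f ^^ p n) y) < 1 / Suc n"
    by (rule synchronized_cantor_schemes_cantor_sets[OF schemes]) auto
  define S where "S = \<Union>(range K)"
  have "sigma_cantor S"
    unfolding sigma_cantor_def S_def using K(1) by (intro exI[of _ "range K"]) auto
  moreover have "closure S = UNIV"
  proof (rule ccontr)
    assume "closure S \<noteq> UNIV"
    then have "open (- closure S)" "- closure S \<noteq> {}" by auto
    then obtain j where "B j \<subseteq> - closure S" using B_base by blast
    moreover have "K j \<subseteq> closure S"
      by (rule order_trans[OF _ closure_subset]) (auto simp: S_def)
    ultimately show False using K(2,3)[of j] by blast
  qed
  moreover have "(\<lambda>n. dist ((f ^^ p n) x) ((f ^^ p n) y)) \<longlonglongrightarrow> 0" if xy: "x \<in> S" "y \<in> S" for x y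
  proof -
    obtain i j where "x \<in> K i" "y \<in> K j" using xy unfolding S_def by blast
    then have "dist ((f ^^ p n) x) ((f ^^ p n) y) \<le> inverse (real (Suc n))" if "max i j \<le> n" for n
      using close[OF that] by (simp add: inverse_eq_divide less_imp_le)
    then have "eventually (\<lambda>n. dist ((f ^^ p n) x) ((f ^^ p n) y) \<le> inverse (real (Suc n))) sequentially"
      unfolding eventually_sequentially by blast
    then show ?thesis
      by (intro tendsto_sandwich[OF _ _ tendsto_const LIMSEQ_inverse_real_of_nat]) simp_all
  qed
  ultimately show ?thesis by blast
qed

lemma Prox_dense_imp_synchronized_sigma_cantor:
  fixes f :: "'a::{polish_space, perfect_space} \<Rightarrow> 'a"
  assumes dense: "Prox_dense f" and cont: "continuous_on UNIV f"
  shows "\<exists>p S. sigma_cantor S \<and> closure S = UNIV \<and>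
           (\<forall>x\<in>S. \<forall>y\<in>S. (\<lambda>n. dist ((f ^^ p n) x) ((f ^^ p n) y)) \<longlonglongrightarrow> 0)"
proof -
  obtain B :: "nat \<Rightarrow> 'a set" where B: "\<And>j. open (B j)" "\<And>j. B j \<noteq> {}"
    and B_base: "\<And>T. open T \<Longrightarrow> T \<noteq> {} \<Longrightarrow> \<exists>j. B j \<subseteq> T"
    using countable_nonempty_open_base by blast
  obtain V p where "synchronized_cantor_schemes f B V p"
    using Prox_dense_imp_synchronized_cantor_schemes[where B = B, OF dense cont B] by blast
  then show ?thesis using synchronized_cantor_schemes_imp_sigma_cantor[OF B_base] by blast
qed

section \<open>Dense proximality from a synchronized dense set\<close>

lemma tendsto_frequent_value:
  fixes g :: "nat \<Rightarrow> 'b::metric_space"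
  assumes lim: "(\<lambda>m. g (p m)) \<longlonglongrightarrow> l" and freq: "\<exists>\<^sub>F m in sequentially. p m = c"
  shows "g c = l"
proof -
  have "dist (g c) l < e" if "e > 0" for e
  proof -
    have "\<exists>\<^sub>F m in sequentially. dist (g (p m)) l < e \<and> p m = c"
      using frequently_eventually_conj[OF freq tendstoD[OF lim that]] .
    then show ?thesis by (auto dest: frequently_ex)
  qed
  then show ?thesis by (metis dist_eq_0_iff less_irrefl zero_less_dist_iff)
qed

lemma eventually_less_imp_frequently_eq:
  fixes p :: "nat \<Rightarrow> nat"
  assumes "eventually (\<lambda>m. p m < N) sequentially"
  obtains c where "\<exists>\<^sub>F m in sequentially. p m = c"
proof -
  have "\<exists>c. \<exists>\<^sub>F m in sequentially. p m = c"
  proof (rule ccontr)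
    assume "\<nexists>c. \<exists>\<^sub>F m in sequentially. p m = c"
    then have "eventually (\<lambda>m. \<forall>c\<in>{..<N}. p m \<noteq> c) sequentially"
      by (intro eventually_ball_finite) (auto simp: not_frequently)
    with assms have "eventually (\<lambda>m. False) sequentially"
      by eventually_elim auto
    then show False by simp
  qed
  then show thesis using that by blast
qed

lemma funpow_eq_of_frequent_time:
  fixes f :: "'a::metric_space \<Rightarrow> 'a" and p :: "nat \<Rightarrow> nat"
  assumes cont: "continuous_on UNIV f" and dense: "closure S = UNIV"
    and lim: "\<forall>x\<in>S. \<forall>y\<in>S. (\<lambda>n. dist ((f ^^ p n) x) ((f ^^ p n) y)) \<longlonglongrightarrow> 0"
    and c: "\<exists>\<^sub>F m in sequentially. p m = c" and "c \<le> n"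
  shows "(f ^^ n) a = (f ^^ n) b"
proof -
  have on_S: "(f ^^ c) x = (f ^^ c) y" if "x \<in> S" "y \<in> S" for x y
    using tendsto_frequent_value[OF lim[rule_format, OF that] c] by simp
  have "S \<noteq> {}" using dense by auto
  then obtain s where "s \<in> S" by blast
  have const: "(f ^^ c) z = (f ^^ c) s" for z
  proof (rule continuous_constant_on_closure[of S "f ^^ c"])
    show "continuous_on (closure S) (f ^^ c)" using continuous_on_funpow[OF cont] dense by simp
    show "(f ^^ c) x = (f ^^ c) s" if "x \<in> S" for x using on_S[OF that \<open>s \<in> S\<close>] .
  qed (simp add: dense)
  have "f ^^ n = f ^^ (n - c) \<circ> f ^^ c" using \<open>c \<le> n\<close> by (simp add: funpow_add[symmetric])
  then show ?thesis using const[of a] const[of b] by simp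
qed

lemma frequently_dist_funpow_less:
  fixes f :: "'a::metric_space \<Rightarrow> 'a" and p :: "nat \<Rightarrow> nat"
  assumes cont: "continuous_on UNIV f" and dense: "closure S = UNIV"
    and lim: "\<forall>x\<in>S. \<forall>y\<in>S. (\<lambda>n. dist ((f ^^ p n) x) ((f ^^ p n) y)) \<longlonglongrightarrow> 0"
    and F: "finite F" "F \<subseteq> S" and "e > 0"
  shows "\<exists>\<^sub>F n in sequentially. \<forall>a\<in>F. \<forall>b\<in>F. dist ((f ^^ n) a) ((f ^^ n) b) < e"
proof (cases "\<forall>N. \<exists>\<^sub>F m in sequentially. N \<le> p m")
  case True
  have small: "eventually (\<lambda>m. \<forall>a\<in>F. \<forall>b\<in>F. dist ((f ^^ p m) a) ((f ^^ p m) b) < e) sequentially"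
    using F lim \<open>e > 0\<close> by (auto intro!: eventually_ball_finite order_tendstoD(2)[of _ 0])
  show ?thesis
    unfolding frequently_sequentially
  proof
    fix N
    obtain m where "N \<le> p m" "\<forall>a\<in>F. \<forall>b\<in>F. dist ((f ^^ p m) a) ((f ^^ p m) b) < e"
      using frequently_ex[OF frequently_eventually_conj[OF True[rule_format, of N] small]] by blast
    then show "\<exists>n\<ge>N. \<forall>a\<in>F. \<forall>b\<in>F. dist ((f ^^ n) a) ((f ^^ n) b) < e" by blast
  qed
next
  case False
  then obtain N where "eventually (\<lambda>m. p m < N) sequentially"
    by (auto simp: not_frequently not_le)
  then obtain c where c: "\<exists>\<^sub>F m in sequentially. p m = c"
    by (rule eventually_less_imp_frequently_eq)
  have "eventually (\<lambda>n. \<forall>a\<in>F. \<forall>b\<in>F. dist ((f ^^ n) a) ((f ^^ n) b) < e) sequentially"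
    using eventually_ge_at_top[of c]
  proof (rule eventually_mono)
    fix n assume "c \<le> n"
    show "\<forall>a\<in>F. \<forall>b\<in>F. dist ((f ^^ n) a) ((f ^^ n) b) < e"
    proof (intro ballI)
      fix a b
      have "(f ^^ n) a = (f ^^ n) b" by (rule funpow_eq_of_frequent_time[OF cont dense lim c \<open>c \<le> n\<close>])
      then show "dist ((f ^^ n) a) ((f ^^ n) b) < e" using \<open>e > 0\<close> by simp
    qed
  qed
  then show ?thesis by (simp add: eventually_frequently)
qed

lemma PiE_subset_Prox:
  fixes f :: "'a::metric_space \<Rightarrow> 'a" and p :: "nat \<Rightarrow> nat"
  assumes cont: "continuous_on UNIV f" and dense: "closure S = UNIV"
    and lim: "\<forall>x\<in>S. \<forall>y\<in>S. (\<lambda>n. dist ((f ^^ p n) x) ((f ^^ p n) y)) \<longlonglongrightarrow> 0"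
    and "k \<ge> 2"
  shows "PiE {..<k} (\<lambda>_. S) \<subseteq> Prox k f"
proof
  fix y assume y: "y \<in> PiE {..<k} (\<lambda>_. S)"
  have "\<exists>\<^sub>F n in sequentially. \<forall>i j. i < j \<longrightarrow> j < k \<longrightarrow> dist ((f ^^ n) (y i)) ((f ^^ n) (y j)) < e"
    if "e > 0" for e
  proof -
    have "y ` {..<k} \<subseteq> S" using y by auto
    from frequently_dist_funpow_less[OF cont dense lim finite_imageI[OF finite_lessThan] this that]
    show ?thesis by (rule frequently_elim1) auto
  qed
  moreover have "y \<in> PiE {..<k} (\<lambda>_. UNIV)" using y by (auto simp: PiE_iff)
  ultimately show "y \<in> Prox k f" using mem_Prox_iff[OF \<open>k \<ge> 2\<close>] by blast
qed

lemma synchronized_dense_set_imp_Prox_dense: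
  fixes f :: "'a::metric_space \<Rightarrow> 'a" and p :: "nat \<Rightarrow> nat"
  assumes cont: "continuous_on UNIV f" and dense: "closure S = UNIV"
    and lim: "\<forall>x\<in>S. \<forall>y\<in>S. (\<lambda>n. dist ((f ^^ p n) x) ((f ^^ p n) y)) \<longlonglongrightarrow> 0"
  shows "Prox_dense f"
  unfolding Prox_dense_def
proof (intro allI impI antisym)
  fix k :: nat assume "k \<ge> 2"
  show "product_topology (\<lambda>_. euclidean) {..<k} closure_of Prox k f
      \<subseteq> topspace (product_topology (\<lambda>_. euclidean) {..<k})"
    by (rule closure_of_subset_topspace)
  have "topspace (product_topology (\<lambda>_. euclidean) {..<k})
      = product_topology (\<lambda>_. euclidean) {..<k} closure_of PiE {..<k} (\<lambda>_. S)"
    by (simp add: closure_of_product_topology dense)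
  also have "\<dots> \<subseteq> product_topology (\<lambda>_. euclidean) {..<k} closure_of Prox k f"
    by (intro closure_of_mono PiE_subset_Prox[OF cont dense lim \<open>k \<ge> 2\<close>])
  finally show "topspace (product_topology (\<lambda>_. euclidean) {..<k})
      \<subseteq> product_topology (\<lambda>_. euclidean) {..<k} closure_of Prox k f" .
qed

theorem corollary2p4:
  fixes f :: "'a::{polish_space, perfect_space} \<Rightarrow> 'a"
  assumes "continuous_on UNIV f"
  shows "(\<forall>k\<ge>2. (product_topology (\<lambda>_. euclidean) {..<k}) closure_of (Prox k f)
                 = topspace (product_topology (\<lambda>_. euclidean) {..<k}))
         \<longleftrightarrow> (\<exists>p :: nat \<Rightarrow> nat. \<exists>S. sigma_cantor S \<and> closure S = UNIV \<and>
               (\<forall>x\<in>S. \<forall>y\<in>S. (\<lambda>n. dist ((f ^^ p n) x) ((f ^^ p n) y)) \<longlonglongrightarrow> 0))"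
  using Prox_dense_imp_synchronized_sigma_cantor[OF _ assms] synchronized_dense_set_imp_Prox_dense[OF assms]
  unfolding Prox_dense_def by blast

end
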